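(* Let $\mathcal{A}$ be a class of continuous nondecreasing functions $\mathbb{R}\to\mathbb{R}$ such that for every compact $K\subset\mathbb{R}$, every continuous nondecreasing $h:K\to\mathbb{R}$ and every $\eta>0$ there is $\alpha\in\mathcal{A}$ with $\sup_{x\in K}|h(x)-\alpha(x)|<\eta$. Let $F:[0,1]^d\to\mathbb{R}$ be of the form $F(\boldsymbol{x})=\sum_{i=1}^N\psi_i(\boldsymbol{a}_i^\top\boldsymbol{x}+b_i)$ with $\boldsymbol{a}_i\in\mathbb{R}^d$, $b_i\in\mathbb{R}$ and each $\psi_i\in C^1(\mathbb{R})$ convex. Then for every $\epsilon>0$ there exist $M\ge1$, $\boldsymbol{W}\in\mathbb{R}^{M\times d}$, $\boldsymbol{c}\in\mathbb{R}^M$, $\boldsymbol{b}\in\mathbb{R}^d$ and $\sigma_1,\dots,\sigma_M\in\mathcal{A}$ such that, with $\sigma(\boldsymbol{z})=(\sigma_1(z_1),\dots,\sigma_M(z_M))$, $$\sup_{\boldsymbol{x}\in[0,1]^d}\|\nabla F(\boldsymbol{x})-(\boldsymbol{W}^\top\sigma(\boldsymbol{W}\boldsymbol{x}+\boldsymbol{c})+\boldsymbol{b})\|<\epsilon,$$ and each such approximator is the gradient of a convex function on $\mathbb{R}^d$.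
   Context: $C^1(\mathbb{R})$ denotes continuously differentiable real functions on $\mathbb{R}$. $\|\cdot\|$ is the Euclidean norm. *)

theory Defs
  imports "HOL-Analysis.Analysis"
begin

definition grad :: "('a::real_inner \<Rightarrow> real) \<Rightarrow> 'a \<Rightarrow> 'a" where
  "grad f x = (THE D. GDERIV f x :> D)"

definition unit_cube :: "(real ^ 'd) set" where
  "unit_cube = {x. \<forall>i. 0 \<le> x $ i \<and> x $ i \<le> 1}"

text \<open>The network x |-> W^T sigma(W x + c) + b, where the rows of W are w 0, ..., w (M-1).\<close>
definition mono_net ::
  "nat \<Rightarrow> (nat \<Rightarrow> real ^ 'd) \<Rightarrow> (nat \<Rightarrow> real) \<Rightarrow> real ^ 'd \<Rightarrow> (nat \<Rightarrow> real \<Rightarrow> real)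
     \<Rightarrow> real ^ 'd \<Rightarrow> real ^ 'd" where
  "mono_net M w c b \<sigma> x = (\<Sum>j<M. \<sigma> j (w j \<bullet> x + c j) *\<^sub>R w j) + b"

end

theory Submission
  imports Defs "HOL-Analysis.Interval_Integral"
begin

text \<open>
  Each ridge function \<open>x \<mapsto> \<psi>\<^sub>i(a\<^sub>i \<bullet> x + b\<^sub>i)\<close> has gradient \<open>\<psi>\<^sub>i'(a\<^sub>i \<bullet> x + b\<^sub>i) a\<^sub>i\<close>, and
  \<open>\<psi>\<^sub>i'\<close> is continuous and nondecreasing because \<open>\<psi>\<^sub>i\<close> is convex and \<open>C\<^sup>1\<close>. So \<open>\<nabla>F\<close> is already a
  network with rows \<open>a\<^sub>i\<close>, offsets \<open>b\<^sub>i\<close> and activations \<open>\<psi>\<^sub>i'\<close>; replacing each \<open>\<psi>\<^sub>i'\<close> by a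
  uniform \<open>\<eta>\<close>-approximant from \<open>\<A>\<close> on the compact image of the cube under \<open>x \<mapsto> a\<^sub>i \<bullet> x + b\<^sub>i\<close>
  changes the network by at most \<open>\<eta> \<Sum>\<^sub>i \<parallel>a\<^sub>i\<parallel>\<close>. Conversely, if \<open>S\<^sub>j\<close> is an antiderivative of
  the monotone activation \<open>\<sigma>\<^sub>j\<close>, then \<open>S\<^sub>j\<close> is convex and the network is the gradient of the
  convex function \<open>\<Sum>\<^sub>j S\<^sub>j(w\<^sub>j \<bullet> x + c\<^sub>j) + b \<bullet> x\<close>.
\<close>

definition uniformly_approximates_monotone :: "(real \<Rightarrow> real) set \<Rightarrow> bool" where
  "uniformly_approximates_monotone \<A> \<longleftrightarrow>
     (\<forall>K h \<eta>. compact K \<and> continuous_on K h \<and> mono_on K h \<and> \<eta> > 0 \<longrightarrow>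
        (\<exists>\<alpha>\<in>\<A>. \<forall>x\<in>K. \<bar>h x - \<alpha> x\<bar> < \<eta>))"

lemma grad_eqI:
  fixes f :: "'a::real_inner \<Rightarrow> real"
  assumes "GDERIV f x :> D"
  shows "grad f x = D"
  unfolding grad_def
proof (rule the_equality)
  fix D' assume "GDERIV f x :> D'"
  then have "(\<lambda>h. h \<bullet> D') = (\<lambda>h. h \<bullet> D)"
    using assms unfolding gderiv_def by (rule has_derivative_unique)
  then have "(D' - D) \<bullet> (D' - D) = 0"
    by (metis inner_diff_right right_minus_eq)
  then show "D' = D" by simp
qed (fact assms)

lemma GDERIV_sum:
  assumes "finite S" "\<And>i. i \<in> S \<Longrightarrow> GDERIV (f i) x :> D i"
  shows "GDERIV (\<lambda>x. \<Sum>i\<in>S. f i x) x :> (\<Sum>i\<in>S. D i)"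
  using assms by (induction S rule: finite_induct) (simp_all add: GDERIV_const GDERIV_add)

lemma GDERIV_affine:
  fixes w :: "'a::real_inner"
  shows "GDERIV (\<lambda>x. w \<bullet> x + c) x :> w"
  unfolding gderiv_def by (auto intro!: derivative_eq_intros simp: inner_commute)

lemma GDERIV_ridge:
  fixes w :: "'a::real_inner"
  assumes "DERIV g (w \<bullet> x + c) :> d"
  shows "GDERIV (\<lambda>x. g (w \<bullet> x + c)) x :> d *\<^sub>R w"
  by (rule GDERIV_DERIV_compose[OF GDERIV_affine assms])

lemma convex_on_ridge:
  fixes w :: "'a::real_inner"
  assumes "convex_on UNIV g"
  shows "convex_on UNIV (\<lambda>x. g (w \<bullet> x + c))"
proof (rule convex_onI)
  fix x y :: 'a and t :: real
  assume "0 < t" "t < 1"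
  moreover have "w \<bullet> ((1 - t) *\<^sub>R x + t *\<^sub>R y) + c = (1 - t) *\<^sub>R (w \<bullet> x + c) + t *\<^sub>R (w \<bullet> y + c)"
    by (simp add: inner_add_right algebra_simps)
  ultimately show "g (w \<bullet> ((1 - t) *\<^sub>R x + t *\<^sub>R y) + c) \<le> (1 - t) * g (w \<bullet> x + c) + t * g (w \<bullet> y + c)"
    using convex_onD[OF assms, of t] by simp
qed simp

lemma convex_on_sum_fun:
  assumes "finite S" "\<And>i. i \<in> S \<Longrightarrow> convex_on UNIV (f i)"
  shows "convex_on UNIV (\<lambda>x. \<Sum>i\<in>S. f i x)"
  using assms by (induction S rule: finite_induct) (simp_all add: convex_on_const convex_on_add)

lemma convex_on_deriv_mono:
  fixes f f' :: "real \<Rightarrow> real"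
  assumes convex: "convex_on UNIV f" and deriv: "\<And>t. (f has_real_derivative f' t) (at t)"
  shows "mono f'"
proof (rule monoI)
  fix x y :: real assume "x \<le> y"
  have "f y - f x \<ge> f' x * (y - x)" "f x - f y \<ge> f' y * (x - y)"
    by (rule convex_on_imp_above_tangent[OF convex]; simp add: deriv)+
  then have "f' x * (y - x) \<le> f' y * (y - x)" by (simp add: algebra_simps)
  with \<open>x \<le> y\<close> show "f' x \<le> f' y"
    by (cases "x = y") (simp_all add: mult_le_cancel_right)
qed

lemma C1_convex_derivative:
  fixes f :: "real \<Rightarrow> real"
  assumes "f C1_differentiable_on UNIV" "convex_on UNIV f"
  obtains f' where "\<And>t. (f has_real_derivative f' t) (at t)" "continuous_on UNIV f'" "mono f'"
proof -
  obtain f' where "\<And>t. (f has_real_derivative f' t) (at t)" "continuous_on UNIV f'"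
    using assms(1)
    by (auto simp: C1_differentiable_on_def has_real_derivative_iff_has_vector_derivative)
  with convex_on_deriv_mono[OF assms(2)] that show thesis by blast
qed

lemma convex_antiderivative_exists:
  fixes \<sigma> :: "real \<Rightarrow> real"
  assumes "continuous_on UNIV \<sigma>" "mono \<sigma>"
  obtains S where "convex_on UNIV S" "\<And>t. (S has_real_derivative \<sigma> t) (at t)"
proof -
  have "\<exists>S. \<forall>t::real. (-\<infinity>::ereal) < t \<longrightarrow> t < \<infinity> \<longrightarrow> (S has_vector_derivative \<sigma> t) (at t)"
    by (rule einterval_antiderivative) (use assms in \<open>auto simp: continuous_on_eq_continuous_at\<close>)
  then obtain S where S: "\<And>t. (S has_real_derivative \<sigma> t) (at t)"
    by (auto simp: has_real_derivative_iff_has_vector_derivative)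
  moreover have "convex_on UNIV S"
    by (rule convex_on_realI[OF _ S]) (use \<open>mono \<sigma>\<close> in \<open>auto simp: monoD\<close>)
  ultimately show thesis using that by blast
qed

lemma mono_net_convex_potential:
  assumes "\<And>j. j < M \<Longrightarrow> continuous_on UNIV (\<sigma> j)" "\<And>j. j < M \<Longrightarrow> mono (\<sigma> j)"
  shows "\<exists>\<Phi> :: real ^ 'd \<Rightarrow> real. convex_on UNIV \<Phi> \<and> (\<forall>x. GDERIV \<Phi> x :> mono_net M w c b \<sigma> x)"
proof -
  have "\<forall>j. \<exists>S. j < M \<longrightarrow> convex_on UNIV S \<and> (\<forall>t. (S has_real_derivative \<sigma> j t) (at t))"
    by (metis assms convex_antiderivative_exists)
  then obtain S where S_convex: "\<And>j. j < M \<Longrightarrow> convex_on UNIV (S j)"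
    and S_deriv: "\<And>j t. j < M \<Longrightarrow> (S j has_real_derivative \<sigma> j t) (at t)"
    by metis
  define \<Phi> where "\<Phi> x = (\<Sum>j<M. S j (w j \<bullet> x + c j)) + b \<bullet> x" for x :: "real ^ 'd"
  have "convex_on UNIV (\<lambda>x::real ^ 'd. \<Sum>j<M. S j (w j \<bullet> x + c j))"
    by (intro convex_on_sum_fun convex_on_ridge S_convex) auto
  moreover have "convex_on UNIV (\<lambda>x::real ^ 'd. b \<bullet> x)"
    using convex_on_ridge[of "\<lambda>t. t" b 0] by (simp add: convex_on_ident)
  ultimately have "convex_on UNIV \<Phi>"
    unfolding \<Phi>_def by (rule convex_on_add)
  moreover have "GDERIV \<Phi> x :> mono_net M w c b \<sigma> x" for x
    unfolding \<Phi>_def mono_net_def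
    by (intro GDERIV_add GDERIV_affine[of b 0, simplified] GDERIV_sum GDERIV_ridge S_deriv) auto
  ultimately show ?thesis by blast
qed

lemma grad_ridge_sum:
  fixes a :: "nat \<Rightarrow> 'a::real_inner"
  assumes "\<And>i t. i < N \<Longrightarrow> (\<psi> i has_real_derivative D i t) (at t)"
  shows "grad (\<lambda>x. \<Sum>i<N. \<psi> i (a i \<bullet> x + b i)) x = (\<Sum>i<N. D i (a i \<bullet> x + b i) *\<^sub>R a i)"
  by (intro grad_eqI GDERIV_sum GDERIV_ridge assms) auto

text \<open>The extra zero row makes \<open>M \<ge> 1\<close> also when \<open>N = 0\<close>.\<close>

lemma mono_net_padded:
  "mono_net (Suc N) (\<lambda>j. if j < N then a j else 0) (\<lambda>j. if j < N then b j else 0) 0 \<sigma> x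
     = (\<Sum>i<N. \<sigma> i (a i \<bullet> x + b i) *\<^sub>R a i)"
  unfolding mono_net_def by simp

lemma norm_sum_scaleR_le:
  assumes "\<And>i. i \<in> S \<Longrightarrow> \<bar>e i\<bar> \<le> \<eta>"
  shows "norm (\<Sum>i\<in>S. e i *\<^sub>R v i) \<le> \<eta> * (\<Sum>i\<in>S. norm (v i))"
proof -
  have "norm (\<Sum>i\<in>S. e i *\<^sub>R v i) \<le> (\<Sum>i\<in>S. \<bar>e i\<bar> * norm (v i))"
    by (metis (no_types, lifting) norm_scaleR norm_sum sum.cong)
  also have "\<dots> \<le> (\<Sum>i\<in>S. \<eta> * norm (v i))"
    by (intro sum_mono mult_right_mono assms) auto
  finally show ?thesis by (simp add: sum_distrib_left)
qed

lemma approximants_on_ridge_ranges: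
  fixes a :: "nat \<Rightarrow> real ^ 'd"
  assumes "uniformly_approximates_monotone \<A>" "compact X" "\<eta> > 0"
    and "\<And>i. i < N \<Longrightarrow> continuous_on UNIV (D i)" "\<And>i. i < N \<Longrightarrow> mono (D i)"
  obtains \<alpha> where "\<And>i. i < N \<Longrightarrow> \<alpha> i \<in> \<A>"
    and "\<And>i x. i < N \<Longrightarrow> x \<in> X \<Longrightarrow> \<bar>D i (a i \<bullet> x + b i) - \<alpha> i (a i \<bullet> x + b i)\<bar> < \<eta>"
proof -
  have "\<exists>\<alpha>\<in>\<A>. \<forall>x\<in>X. \<bar>D i (a i \<bullet> x + b i) - \<alpha> (a i \<bullet> x + b i)\<bar> < \<eta>" if "i < N" for i
  proof -
    let ?K = "(\<lambda>x. a i \<bullet> x + b i) ` X"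
    have "compact ?K"
      by (intro compact_continuous_image \<open>compact X\<close>) (auto intro!: continuous_intros)
    moreover have "continuous_on ?K (D i)"
      by (rule continuous_on_subset[OF assms(4)[OF that]]) simp
    moreover have "mono_on ?K (D i)"
      using assms(5)[OF that] by (simp add: mono_on_def monoD)
    ultimately have "\<exists>\<alpha>\<in>\<A>. \<forall>t\<in>?K. \<bar>D i t - \<alpha> t\<bar> < \<eta>"
      using assms(1,3) unfolding uniformly_approximates_monotone_def by blast
    then show ?thesis by auto
  qed
  then have "\<forall>i. \<exists>\<alpha>. i < N \<longrightarrow> \<alpha> \<in> \<A> \<and> (\<forall>x\<in>X. \<bar>D i (a i \<bullet> x + b i) - \<alpha> (a i \<bullet> x + b i)\<bar> < \<eta>)"
    by blast
  then obtain \<alpha> where "\<forall>i. i < N \<longrightarrow> \<alpha> i \<in> \<A> \<and> (\<forall>x\<in>X. \<bar>D i (a i \<bullet> x + b i) - \<alpha> i (a i \<bullet> x + b i)\<bar> < \<eta>)"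
    by (rule choice[THEN exE])
  then show thesis
    by (intro that[of \<alpha>]) auto
qed

lemma mono_net_approximates_ridge_gradient:
  fixes a :: "nat \<Rightarrow> real ^ 'd"
  assumes \<A>: "uniformly_approximates_monotone \<A>" and X: "compact X" "X \<noteq> {}" and "\<epsilon> > 0"
    and "\<And>i. i < N \<Longrightarrow> continuous_on UNIV (D i)" "\<And>i. i < N \<Longrightarrow> mono (D i)"
  shows "\<exists>M w c b' \<sigma>. M \<ge> 1 \<and> (\<forall>j<M. \<sigma> j \<in> \<A>) \<and>
           (SUP x\<in>X. norm ((\<Sum>i<N. D i (a i \<bullet> x + b i) *\<^sub>R a i) - mono_net M w c b' \<sigma> x)) < \<epsilon>"
proof -
  obtain \<alpha>0 where "\<alpha>0 \<in> \<A>"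
    using \<A>[unfolded uniformly_approximates_monotone_def, rule_format, of "{}" "\<lambda>t. t" 1] by auto
  define \<eta> where "\<eta> = \<epsilon> / (2 * ((\<Sum>i<N. norm (a i)) + 1))"
  have "0 \<le> (\<Sum>i<N. norm (a i))" by (simp add: sum_nonneg)
  then have "\<eta> > 0" and \<eta>_small: "\<eta> * (\<Sum>i<N. norm (a i)) < \<epsilon>"
    using \<open>\<epsilon> > 0\<close> by (simp_all add: \<eta>_def field_simps add_pos_nonneg)
  obtain \<alpha> where \<alpha>: "\<And>i. i < N \<Longrightarrow> \<alpha> i \<in> \<A>"
    and close: "\<And>i x. i < N \<Longrightarrow> x \<in> X \<Longrightarrow> \<bar>D i (a i \<bullet> x + b i) - \<alpha> i (a i \<bullet> x + b i)\<bar> < \<eta>"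
    by (rule approximants_on_ridge_ranges[where N=N and D=D and a=a and b=b, OF \<A> X(1) \<open>\<eta> > 0\<close> assms(5,6)]) (auto intro: that)
  define \<sigma> where "\<sigma> j = (if j < N then \<alpha> j else \<alpha>0)" for j
  define w where "w = (\<lambda>j. if j < N then a j else 0)"
  define c where "c = (\<lambda>j. if j < N then b j else 0)"
  have pointwise: "norm ((\<Sum>i<N. D i (a i \<bullet> x + b i) *\<^sub>R a i) - mono_net (Suc N) w c 0 \<sigma> x)
      \<le> \<eta> * (\<Sum>i<N. norm (a i))" if "x \<in> X" for x
  proof -
    have "(\<Sum>i<N. D i (a i \<bullet> x + b i) *\<^sub>R a i) - mono_net (Suc N) w c 0 \<sigma> x
        = (\<Sum>i<N. (D i (a i \<bullet> x + b i) - \<alpha> i (a i \<bullet> x + b i)) *\<^sub>R a i)"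
      unfolding w_def c_def mono_net_padded by (simp add: \<sigma>_def scaleR_diff_left sum_subtractf)
    moreover have "norm (\<Sum>i<N. (D i (a i \<bullet> x + b i) - \<alpha> i (a i \<bullet> x + b i)) *\<^sub>R a i)
        \<le> \<eta> * (\<Sum>i<N. norm (a i))"
      by (rule norm_sum_scaleR_le) (simp add: close that less_imp_le)
    ultimately show ?thesis by simp
  qed
  have "(SUP x\<in>X. norm ((\<Sum>i<N. D i (a i \<bullet> x + b i) *\<^sub>R a i) - mono_net (Suc N) w c 0 \<sigma> x)) < \<epsilon>"
    using le_less_trans[OF cSUP_least[OF X(2) pointwise] \<eta>_small] .
  moreover have "\<forall>j<Suc N. \<sigma> j \<in> \<A>"
    using \<alpha> \<open>\<alpha>0 \<in> \<A>\<close> by (simp add: \<sigma>_def)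
  ultimately show ?thesis
    by (intro exI[of _ "Suc N"] exI[of _ w] exI[of _ c] exI[of _ 0] exI[of _ \<sigma>]) simp
qed

lemma compact_unit_cube: "compact unit_cube"
proof -
  have "unit_cube = cbox (0::real ^ 'd) 1"
    by (auto simp: unit_cube_def mem_box_cart)
  then show ?thesis by (metis compact_cbox)
qed

lemma unit_cube_nonempty: "unit_cube \<noteq> {}"
proof -
  have "0 \<in> unit_cube" by (simp add: unit_cube_def)
  then show ?thesis by blast
qed

theorem corollary2:
  fixes \<A> :: "(real \<Rightarrow> real) set"
    and N :: nat and a :: "nat \<Rightarrow> real ^ 'd" and bF :: "nat \<Rightarrow> real"
    and \<psi> :: "nat \<Rightarrow> real \<Rightarrow> real" and \<epsilon> :: real
  assumes A_cont: "\<forall>\<alpha>\<in>\<A>. continuous_on UNIV \<alpha>"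
    and A_mono: "\<forall>\<alpha>\<in>\<A>. mono \<alpha>"
    and A_dense: "\<forall>K h \<eta>. compact K \<and> continuous_on K h \<and> mono_on K h \<and> \<eta> > 0 \<longrightarrow>
                    (\<exists>\<alpha>\<in>\<A>. \<forall>x\<in>K. \<bar>h x - \<alpha> x\<bar> < \<eta>)"
    and psi_C1: "\<forall>i<N. \<psi> i C1_differentiable_on UNIV"
    and psi_convex: "\<forall>i<N. convex_on UNIV (\<psi> i)"
    and eps: "\<epsilon> > 0"
  defines "F \<equiv> (\<lambda>x::real ^ 'd. \<Sum>i<N. \<psi> i (a i \<bullet> x + bF i))"
  shows "(\<exists>M w c b \<sigma>. M \<ge> 1 \<and> (\<forall>j<M. \<sigma> j \<in> \<A>) \<and>
            (SUP x\<in>unit_cube. norm (grad F x - mono_net M w c b \<sigma> x)) < \<epsilon>)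
       \<and> (\<forall>M w c b \<sigma>. (\<forall>j<M. \<sigma> j \<in> \<A>) \<longrightarrow>
            (\<exists>\<Phi>::real ^ 'd \<Rightarrow> real. convex_on UNIV \<Phi> \<and>
               (\<forall>x. GDERIV \<Phi> x :> mono_net M w c b \<sigma> x)))"
proof
  have "\<forall>i. \<exists>D. i < N \<longrightarrow>
      (\<forall>t. (\<psi> i has_real_derivative D t) (at t)) \<and> continuous_on UNIV D \<and> mono D"
    by (metis C1_convex_derivative psi_C1 psi_convex)
  then obtain D where D: "\<And>i t. i < N \<Longrightarrow> (\<psi> i has_real_derivative D i t) (at t)"
    and D_cont: "\<And>i. i < N \<Longrightarrow> continuous_on UNIV (D i)"
    and D_mono: "\<And>i. i < N \<Longrightarrow> mono (D i)"
    by metis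
  have "uniformly_approximates_monotone \<A>"
    using A_dense unfolding uniformly_approximates_monotone_def .
  then have "\<exists>M w c b \<sigma>. M \<ge> 1 \<and> (\<forall>j<M. \<sigma> j \<in> \<A>) \<and>
      (SUP x\<in>unit_cube. norm ((\<Sum>i<N. D i (a i \<bullet> x + bF i) *\<^sub>R a i) - mono_net M w c b \<sigma> x)) < \<epsilon>"
    using compact_unit_cube unit_cube_nonempty eps D_cont D_mono
    by (rule mono_net_approximates_ridge_gradient)
  moreover have grad_F: "grad F x = (\<Sum>i<N. D i (a i \<bullet> x + bF i) *\<^sub>R a i)" for x
    unfolding F_def using D by (rule grad_ridge_sum)
  ultimately show "\<exists>M w c b \<sigma>. M \<ge> 1 \<and> (\<forall>j<M. \<sigma> j \<in> \<A>) \<and>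
      (SUP x\<in>unit_cube. norm (grad F x - mono_net M w c b \<sigma> x)) < \<epsilon>"
    by (simp only: grad_F)
next
  show "\<forall>M w c b \<sigma>. (\<forall>j<M. \<sigma> j \<in> \<A>) \<longrightarrow>
      (\<exists>\<Phi>::real ^ 'd \<Rightarrow> real. convex_on UNIV \<Phi> \<and> (\<forall>x. GDERIV \<Phi> x :> mono_net M w c b \<sigma> x))"
    using A_cont A_mono by (intro allI impI mono_net_convex_potential) auto
qed

end
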